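(* Let $\mathbb{H}$ be a real Hilbert space (of dimension at least $2$) and let $\mathbb{X},\mathbb{Y}$ be two-dimensional strictly convex smooth real Banach spaces. Let $T$ be a rank one operator either in $\mathbb{L}(\mathbb{H},\mathbb{Y})$ or in $\mathbb{L}(\mathbb{X},\mathbb{H})$, with $\|T\|=1$. If $x\in M_T$ is such that $(x,Tx)$ is not a CPP, then $T$ is an extreme contraction.
   Context: $M_T=\{x \text{ in the unit sphere of the domain}:\|Tx\|=\|T\|\}$. A norm one operator is an extreme contraction if it is an extreme point of the closed unit ball of the space of bounded linear operators between the given spaces. $B(x,r)=\{u:\|u-x\|<r\}$. $x\perp_B y$ means $\|x+\lambda y\|\ge\|x\|$ for all real $\lambda$; $x^\perp=\{y:x\perp_By\}$. For $x$ in the unit sphere $S_{\mathbb{U}}$ of $\mathbb{U}$ and $y\in S_{\mathbb{V}}$, $(x,y)$ is a CPP if there exist $r>0,\mu>0$ such that for all $z\in x^\perp\cap S_{\mathbb{U}}$, all $w\in y^\perp\cap S_{\mathbb{V}}$ and all $a,b\in\mathbb{R}$, $ax+bz\in B(x,r)\cap S_{\mathbb{U}}$ implies $\|ay+b\mu w\|\le1$. *)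

theory Defs
  imports "HOL-Analysis.Analysis"
begin

definition unit_sphere :: "'a::real_normed_vector set" where
  "unit_sphere = {x. norm x = 1}"

definition strictly_convex_space :: "'a::real_normed_vector itself \<Rightarrow> bool" where
  "strictly_convex_space _ \<longleftrightarrow>
     (\<forall>x y::'a. norm x = 1 \<longrightarrow> norm y = 1 \<longrightarrow> x \<noteq> y \<longrightarrow> norm ((1/2) *\<^sub>R (x + y)) < 1)"

definition smooth_space :: "'a::real_normed_vector itself \<Rightarrow> bool" where
  "smooth_space _ \<longleftrightarrow>
     (\<forall>x::'a. norm x = 1 \<longrightarrow> (\<exists>!f::'a \<Rightarrow>\<^sub>L real. norm f = 1 \<and> blinfun_apply f x = 1))"

definition norm_attainment_set :: "('a::real_normed_vector \<Rightarrow>\<^sub>L 'b::real_normed_vector) \<Rightarrow> 'a set" where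
  "norm_attainment_set T = {x. norm x = 1 \<and> norm (blinfun_apply T x) = norm T}"

definition birkhoff_orth :: "'a::real_normed_vector \<Rightarrow> 'a \<Rightarrow> bool" (infix "\<bottom>\<^sub>B" 50) where
  "x \<bottom>\<^sub>B y \<longleftrightarrow> (\<forall>l::real. norm (x + l *\<^sub>R y) \<ge> norm x)"

definition birkhoff_perp :: "'a::real_normed_vector \<Rightarrow> 'a set" where
  "birkhoff_perp x = {y. x \<bottom>\<^sub>B y}"

definition CPP :: "'a::real_normed_vector \<Rightarrow> 'b::real_normed_vector \<Rightarrow> bool" where
  "CPP x y \<longleftrightarrow> norm x = 1 \<and> norm y = 1 \<and>
     (\<exists>r>0. \<exists>\<mu>>0. \<forall>z \<in> birkhoff_perp x \<inter> unit_sphere. \<forall>w \<in> birkhoff_perp y \<inter> unit_sphere.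
        \<forall>a b::real. a *\<^sub>R x + b *\<^sub>R z \<in> ball x r \<inter> unit_sphere \<longrightarrow>
          norm (a *\<^sub>R y + (b * \<mu>) *\<^sub>R w) \<le> 1)"

definition extreme_contraction :: "('a::real_normed_vector \<Rightarrow>\<^sub>L 'b::real_normed_vector) \<Rightarrow> bool" where
  "extreme_contraction T \<longleftrightarrow> norm T = 1 \<and>
     (\<forall>A B t. norm A \<le> 1 \<longrightarrow> norm B \<le> 1 \<longrightarrow> 0 < t \<longrightarrow> t < (1::real) \<longrightarrow>
        T = t *\<^sub>R A + (1 - t) *\<^sub>R B \<longrightarrow> A = B)"

definition rank_one :: "('a::real_normed_vector \<Rightarrow>\<^sub>L 'b::real_normed_vector) \<Rightarrow> bool" where
  "rank_one T \<longleftrightarrow> dim (range (blinfun_apply T)) = 1"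

end

theory Submission
  imports Defs
begin

(* If T = t A + (1 - t) B with A \<noteq> B, then D = s (A - B) is nonzero with \<parallel>T \<plusminus> D\<parallel> \<le> 1.
   The target is strictly convex, so the unit vector T x is an extreme point of its ball and
   D x = 0; evaluating T \<plusminus> D at the unit vectors a x + b z with x \<bottom>\<^sub>B z then makes (x, T x)
   a CPP.
   For T : H \<rightarrow> Y take z \<bottom> x with D z \<noteq> 0: one of v = T z \<plusminus> D z is nonzero and satisfies
   \<parallel>a T x + b v\<parallel> \<le> 1 whenever a\<^sup>2 + b\<^sup>2 = 1, which in the plane Y forces v to be parallel to
   every w \<bottom>\<^sub>B T x, so \<mu> = \<parallel>v\<parallel> works.  For T : X \<rightarrow> H, smoothness of the plane X makes
   \<plusminus>z\<^sub>0 the only unit vectors Birkhoff orthogonal to x and makes the rank one operator T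
   vanish on them, and the parallelogram law in H gives a\<^sup>2 + b\<^sup>2 \<parallel>D z\<^sub>0\<parallel>\<^sup>2 \<le> 1, so
   \<mu> = \<parallel>D z\<^sub>0\<parallel> works.
   The first case uses neither the rank of T, nor the smoothness of Y, nor dim H \<ge> 2. *)

lemma card_le_dim_if_independent_subset:
  fixes V :: "'a::real_vector set"
  assumes "0 < dim V" "A \<subseteq> V" "independent A"
  shows "finite A \<and> card A \<le> dim V"
proof -
  obtain B where B: "B \<subseteq> V" "independent B" "V \<subseteq> span B" "card B = dim V"
    by (rule basis_exists)
  then have "finite B" using assms by (metis card.infinite less_irrefl)
  then show ?thesis using independent_span_bound[of B A] assms B by auto
qed

lemma dim_2_independent_pair_spans:
  fixes a b :: "'a::real_vector"
  assumes "dim (UNIV::'a set) = 2" "independent {a, b}" "a \<noteq> b"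
  shows "\<exists>\<alpha> \<beta>. v = \<alpha> *\<^sub>R a + \<beta> *\<^sub>R b"
proof -
  have "v \<in> span {a, b}"
  proof (rule ccontr)
    assume v: "v \<notin> span {a, b}"
    then have "independent (insert v {a, b})" by (rule independent_insertI) (rule assms(2))
    moreover have "v \<noteq> a" "v \<noteq> b" using v by (auto intro: span_base)
    then have "card (insert v {a, b}) = 3" using assms(3) by simp
    ultimately show False
      using card_le_dim_if_independent_subset[of UNIV "insert v {a, b}"] assms(1) by simp
  qed
  then obtain \<alpha> where "v - \<alpha> *\<^sub>R a \<in> span {b}" by (auto simp: span_breakdown_eq)
  then obtain \<beta> where "v - \<alpha> *\<^sub>R a = \<beta> *\<^sub>R b" by (auto simp: span_singleton)
  then show ?thesis by (metis add.commute diff_eq_eq)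
qed

lemma independent_pair_coordinates_unique:
  fixes a b :: "'a::real_vector"
  assumes "independent {a, b}" "a \<noteq> b"
    and eq: "\<alpha> *\<^sub>R a + \<beta> *\<^sub>R b = \<alpha>' *\<^sub>R a + \<beta>' *\<^sub>R b"
  shows "\<alpha> = \<alpha>' \<and> \<beta> = \<beta>'"
proof -
  have a: "a \<notin> span {b}" and b: "b \<noteq> 0"
    using assms(1,2) by (auto simp: independent_insert dest: dependent_zero)
  have "(\<alpha> - \<alpha>') *\<^sub>R a = (\<beta>' - \<beta>) *\<^sub>R b" using eq by (simp add: algebra_simps)
  then have "inverse (\<alpha> - \<alpha>') *\<^sub>R (\<alpha> - \<alpha>') *\<^sub>R a = (inverse (\<alpha> - \<alpha>') * (\<beta>' - \<beta>)) *\<^sub>R b"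
    by simp
  then have "\<alpha> = \<alpha>'" using a by (auto simp: span_singleton)
  with eq b show ?thesis by simp
qed

lemma rank_one_apply_in_span:
  assumes "rank_one T" "blinfun_apply T x \<noteq> 0"
  shows "blinfun_apply T u \<in> span {blinfun_apply T x}"
proof (rule ccontr)
  assume u: "blinfun_apply T u \<notin> span {blinfun_apply T x}"
  then have "independent {blinfun_apply T u, blinfun_apply T x}"
    using assms(2) by (rule_tac independent_insertI) simp_all
  moreover have "blinfun_apply T u \<noteq> blinfun_apply T x" using u by (auto intro: span_base)
  then have "card {blinfun_apply T u, blinfun_apply T x} = 2" by simp
  ultimately show False
    using card_le_dim_if_independent_subset[of "range (blinfun_apply T)"
        "{blinfun_apply T u, blinfun_apply T x}"] assms(1)
    unfolding rank_one_def by auto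
qed

lemma birkhoff_orth_abs_le_norm:
  assumes "y \<bottom>\<^sub>B w"
  shows "\<bar>a\<bar> * norm y \<le> norm (a *\<^sub>R y + b *\<^sub>R w)"
proof (cases "a = 0")
  case False
  have "norm y \<le> norm (y + (b / a) *\<^sub>R w)" using assms unfolding birkhoff_orth_def by blast
  moreover have "a *\<^sub>R y + b *\<^sub>R w = a *\<^sub>R (y + (b / a) *\<^sub>R w)" using False by (simp add: scaleR_add_right)
  ultimately show ?thesis by (simp add: mult_left_mono)
qed simp

lemma birkhoff_orth_independent:
  assumes "y \<bottom>\<^sub>B w" "y \<noteq> 0" "w \<noteq> 0"
  shows "independent {y, w} \<and> y \<noteq> w"
proof -
  have y: "y \<notin> span {w}"
  proof
    assume "y \<in> span {w}"
    then obtain k where "y = k *\<^sub>R w" by (auto simp: span_singleton)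
    then show False using birkhoff_orth_abs_le_norm[OF assms(1), of 1 "- k"] assms(2,3)
      by (auto simp: mult_le_0_iff)
  qed
  then have "independent (insert y {w})" using assms(3) by (rule_tac independent_insertI) simp_all
  moreover have "y \<noteq> w" using y by (auto intro: span_base)
  ultimately show ?thesis by simp
qed

lemma birkhoff_orth_norming_functional:
  fixes x z :: "'a::real_normed_vector"
  assumes dim: "dim (UNIV::'a set) = 2" and "norm x = 1" "x \<bottom>\<^sub>B z" "z \<noteq> 0"
  shows "\<exists>f::'a \<Rightarrow>\<^sub>L real. norm f = 1 \<and> blinfun_apply f x = 1 \<and> blinfun_apply f z = 0"
proof -
  have xz: "independent {x, z}" "x \<noteq> z" using birkhoff_orth_independent assms by fastforce+
  have coords: "\<exists>\<alpha> \<beta>. v = \<alpha> *\<^sub>R x + \<beta> *\<^sub>R z" for v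
    using dim_2_independent_pair_spans[OF dim xz] .
  define c where "c v = (THE \<alpha>. \<exists>\<beta>. v = \<alpha> *\<^sub>R x + \<beta> *\<^sub>R z)" for v
  have c: "c (\<alpha> *\<^sub>R x + \<beta> *\<^sub>R z) = \<alpha>" for \<alpha> \<beta>
    unfolding c_def by (rule the_equality) (auto dest: independent_pair_coordinates_unique[OF xz])
  have "bounded_linear c"
  proof (rule bounded_linear_intro[where K = 1])
    fix u v :: 'a and r :: real
    obtain a b a' b' where u: "u = a *\<^sub>R x + b *\<^sub>R z" and v: "v = a' *\<^sub>R x + b' *\<^sub>R z"
      using coords by meson
    have "u + v = (a + a') *\<^sub>R x + (b + b') *\<^sub>R z" "r *\<^sub>R u = (r * a) *\<^sub>R x + (r * b) *\<^sub>R z"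
      unfolding u v by (simp_all add: algebra_simps)
    then show "c (u + v) = c u + c v" "c (r *\<^sub>R u) = r *\<^sub>R c u" unfolding u v by (simp_all add: c)
    show "norm (c u) \<le> norm u * 1"
      using birkhoff_orth_abs_le_norm[OF assms(3), of a b] assms(2) unfolding u c by simp
  qed
  then have f: "blinfun_apply (Blinfun c) = c" by (rule bounded_linear_Blinfun_apply)
  have cx: "c x = 1" and cz: "c z = 0" using c[of 1 0] c[of 0 1] by simp_all
  have "norm (Blinfun c) \<le> 1"
  proof (rule norm_blinfun_bound)
    fix u :: 'a
    obtain a b where u: "u = a *\<^sub>R x + b *\<^sub>R z" using coords by blast
    show "norm (blinfun_apply (Blinfun c) u) \<le> 1 * norm u"
      using birkhoff_orth_abs_le_norm[OF assms(3), of a b] assms(2) unfolding f u c by simp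
  qed simp
  moreover have "1 \<le> norm (Blinfun c)" using norm_blinfun[of "Blinfun c" x] assms(2) f cx by simp
  ultimately show ?thesis using f cx cz by (intro exI[of _ "Blinfun c"]) simp
qed

lemma smooth_norming_functional_vanishes_on_birkhoff_orth:
  fixes x z :: "'a::real_normed_vector" and g :: "'a \<Rightarrow>\<^sub>L real"
  assumes "dim (UNIV::'a set) = 2" "smooth_space TYPE('a)" "norm x = 1" "x \<bottom>\<^sub>B z"
    and "norm g = 1" "blinfun_apply g x = 1"
  shows "blinfun_apply g z = 0"
proof (cases "z = 0")
  case False
  then obtain f :: "'a \<Rightarrow>\<^sub>L real" where "norm f = 1" "blinfun_apply f x = 1" "blinfun_apply f z = 0"
    using birkhoff_orth_norming_functional assms(1,3,4) by blast
  moreover have "g = f" using assms(2,3,5,6) calculation unfolding smooth_space_def by blast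
  ultimately show ?thesis by simp
qed simp

lemma smooth_birkhoff_orth_unit_cases:
  fixes x z z\<^sub>0 :: "'a::real_normed_vector"
  assumes dim: "dim (UNIV::'a set) = 2" and sm: "smooth_space TYPE('a)" and x: "norm x = 1"
    and z: "x \<bottom>\<^sub>B z" "norm z = 1" and z\<^sub>0: "x \<bottom>\<^sub>B z\<^sub>0" "norm z\<^sub>0 = 1"
  shows "z = z\<^sub>0 \<or> z = - z\<^sub>0"
proof -
  obtain g :: "'a \<Rightarrow>\<^sub>L real" where g: "norm g = 1" "blinfun_apply g x = 1"
    using sm x unfolding smooth_space_def by blast
  have gz: "blinfun_apply g z = 0" and gz\<^sub>0: "blinfun_apply g z\<^sub>0 = 0"
    using smooth_norming_functional_vanishes_on_birkhoff_orth[OF dim sm x _ g] z z\<^sub>0 by auto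
  have "independent {x, z\<^sub>0}" "x \<noteq> z\<^sub>0" using birkhoff_orth_independent z\<^sub>0 x by fastforce+
  then obtain a b where ab: "z = a *\<^sub>R x + b *\<^sub>R z\<^sub>0" using dim_2_independent_pair_spans[OF dim] by blast
  have "a = 0" using gz gz\<^sub>0 g(2) unfolding ab by (simp add: blinfun.add_right blinfun.scaleR_right)
  then have "\<bar>b\<bar> = 1" using ab z(2) z\<^sub>0(2) by simp
  then have "b = 1 \<or> b = -1" by linarith
  with ab \<open>a = 0\<close> show ?thesis by auto
qed

lemma strictly_convex_unit_extreme:
  fixes y d :: "'a::real_normed_vector"
  assumes sc: "strictly_convex_space TYPE('a)" and "norm y = 1"
    and "norm (y + d) \<le> 1" "norm (y - d) \<le> 1"
  shows "d = 0"
proof (rule ccontr)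
  assume "d \<noteq> 0"
  have "2 = norm ((y + d) + (y - d))" using assms(2) by (simp flip: scaleR_2)
  also have "\<dots> \<le> norm (y + d) + norm (y - d)" by (rule norm_triangle_ineq)
  finally have "norm (y + d) = 1" "norm (y - d) = 1" using assms(3,4) by auto
  moreover have "y + d \<noteq> y - d" using \<open>d \<noteq> 0\<close> by (simp add: eq_neg_iff_add_eq_0 flip: scaleR_2)
  ultimately have "norm ((1/2) *\<^sub>R ((y + d) + (y - d))) < 1"
    using sc unfolding strictly_convex_space_def by blast
  then show False using assms(2) by simp
qed

lemma power2_norm_scaleR_add:
  fixes x z :: "'a::real_inner"
  shows "(norm (a *\<^sub>R x + b *\<^sub>R z))\<^sup>2 = a\<^sup>2 * (norm x)\<^sup>2 + 2 * a * b * (x \<bullet> z) + b\<^sup>2 * (norm z)\<^sup>2"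
  unfolding power2_norm_eq_inner
  by (simp add: inner_add_left inner_add_right inner_commute algebra_simps power2_eq_square)

lemma parallelogram_law:
  fixes u v :: "'a::real_inner"
  shows "(norm (u + v))\<^sup>2 + (norm (u - v))\<^sup>2 = 2 * (norm u)\<^sup>2 + 2 * (norm v)\<^sup>2"
  using power2_norm_scaleR_add[of 1 u 1 v] power2_norm_scaleR_add[of 1 u "-1" v] by simp

lemma strictly_convex_space_inner: "strictly_convex_space TYPE('a::real_inner)"
  unfolding strictly_convex_space_def
proof (intro allI impI)
  fix x y :: 'a
  assume "norm x = 1" "norm y = 1" "x \<noteq> y"
  then have "(norm (x + y))\<^sup>2 + (norm (x - y))\<^sup>2 = 2\<^sup>2" using parallelogram_law[of x y] by simp
  moreover have "0 < (norm (x - y))\<^sup>2" using \<open>x \<noteq> y\<close> by simp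
  ultimately have "(norm (x + y))\<^sup>2 < 2\<^sup>2" by linarith
  then have "norm (x + y) < 2" by (rule power_less_imp_less_base) simp
  then show "norm ((1/2) *\<^sub>R (x + y)) < 1" by simp
qed

lemma parallelogram_bound:
  fixes u v :: "'a::real_inner"
  assumes "norm (u + v) \<le> 1" "norm (u - v) \<le> 1"
  shows "(norm u)\<^sup>2 + (norm v)\<^sup>2 \<le> 1"
proof -
  have "(norm (u + v))\<^sup>2 \<le> 1" "(norm (u - v))\<^sup>2 \<le> 1" using assms by (simp_all add: power_le_one)
  then show ?thesis using parallelogram_law[of u v] by linarith
qed

lemma inner_eq_0_if_birkhoff_orth:
  fixes x z :: "'a::real_inner"
  assumes "x \<bottom>\<^sub>B z"
  shows "x \<bullet> z = 0"
proof (rule ccontr)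
  assume xz: "x \<bullet> z \<noteq> 0"
  then have "z \<noteq> 0" by auto
  define l where "l = - (x \<bullet> z) / (norm z)\<^sup>2"
  have "(norm x)\<^sup>2 \<le> (norm (x + l *\<^sub>R z))\<^sup>2"
    using assms unfolding birkhoff_orth_def by (simp add: power_mono)
  also have "\<dots> = (norm x)\<^sup>2 - (x \<bullet> z)\<^sup>2 / (norm z)\<^sup>2"
    using power2_norm_scaleR_add[of 1 x l z] \<open>z \<noteq> 0\<close> unfolding l_def
    by (simp add: field_simps power2_eq_square)
  finally have "(x \<bullet> z)\<^sup>2 / (norm z)\<^sup>2 \<le> 0" by simp
  moreover have "0 < (x \<bullet> z)\<^sup>2 / (norm z)\<^sup>2" using xz \<open>z \<noteq> 0\<close> by simp
  ultimately show False by linarith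
qed

lemma exists_unit_circle_point_gt_1:
  fixes \<alpha> :: real
  assumes "\<alpha> \<noteq> 0"
  shows "\<exists>a b. a\<^sup>2 + b\<^sup>2 = 1 \<and> 1 < a + b * \<alpha>"
proof -
  define s where "s = sqrt (1 + \<alpha>\<^sup>2)"
  have s: "0 < s" "s\<^sup>2 = 1 + \<alpha>\<^sup>2" "0 < 1 + \<alpha>\<^sup>2"
    unfolding s_def by (simp_all add: add_pos_nonneg)
  have "(1/s)\<^sup>2 + (\<alpha>/s)\<^sup>2 = 1" "1/s + (\<alpha>/s) * \<alpha> = s"
    using s by (simp_all add: field_simps power2_eq_square)
  moreover have "1 < s" unfolding s_def using assms by (simp add: real_less_rsqrt)
  ultimately show ?thesis by metis
qed

lemma circle_bound_imp_parallel:
  fixes y v w :: "'a::real_normed_vector"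
  assumes dim: "dim (UNIV::'a set) = 2" and y: "norm y = 1"
    and bound: "\<And>a b. a\<^sup>2 + b\<^sup>2 = 1 \<Longrightarrow> norm (a *\<^sub>R y + b *\<^sub>R v) \<le> 1"
    and yw: "y \<bottom>\<^sub>B w" and "w \<noteq> 0"
  shows "\<exists>\<beta>. v = \<beta> *\<^sub>R w"
proof -
  have "independent {y, w}" "y \<noteq> w" using birkhoff_orth_independent yw y \<open>w \<noteq> 0\<close> by fastforce+
  then obtain \<alpha> \<beta> where v: "v = \<alpha> *\<^sub>R y + \<beta> *\<^sub>R w" using dim_2_independent_pair_spans[OF dim] by blast
  have "\<alpha> = 0"
  proof (rule ccontr)
    assume "\<alpha> \<noteq> 0"
    then obtain a b where ab: "a\<^sup>2 + b\<^sup>2 = 1" "1 < a + b * \<alpha>" using exists_unit_circle_point_gt_1 by blast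
    have "a *\<^sub>R y + b *\<^sub>R v = (a + b * \<alpha>) *\<^sub>R y + (b * \<beta>) *\<^sub>R w"
      unfolding v by (simp add: algebra_simps)
    then have "\<bar>a + b * \<alpha>\<bar> \<le> norm (a *\<^sub>R y + b *\<^sub>R v)"
      using birkhoff_orth_abs_le_norm[OF yw, of "a + b * \<alpha>" "b * \<beta>"] y by simp
    then show False using bound[OF ab(1)] ab(2) by linarith
  qed
  then show ?thesis using v by auto
qed

lemma CPPI:
  assumes "norm x = 1" "norm y = 1" "0 < \<mu>"
    and "\<And>z w a b. x \<bottom>\<^sub>B z \<Longrightarrow> norm z = 1 \<Longrightarrow> y \<bottom>\<^sub>B w \<Longrightarrow> norm w = 1 \<Longrightarrow>
      norm (a *\<^sub>R x + b *\<^sub>R z) = 1 \<Longrightarrow> norm (a *\<^sub>R y + (b * \<mu>) *\<^sub>R w) \<le> 1"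
  shows "CPP x y"
  unfolding CPP_def birkhoff_perp_def unit_sphere_def
  using assms by (intro conjI exI[of _ 1] exI[of _ \<mu>]) auto

lemma CPP_of_circle_bound:
  fixes x :: "'a::real_inner" and y v :: "'b::real_normed_vector"
  assumes dim: "dim (UNIV::'b set) = 2" and x: "norm x = 1" and y: "norm y = 1" and "v \<noteq> 0"
    and bound: "\<And>a b. a\<^sup>2 + b\<^sup>2 = 1 \<Longrightarrow> norm (a *\<^sub>R y + b *\<^sub>R v) \<le> 1"
  shows "CPP x y"
proof (rule CPPI[OF x y])
  show "0 < norm v" using \<open>v \<noteq> 0\<close> by simp
next
  fix z w a b
  assume z: "x \<bottom>\<^sub>B z" "norm z = 1" and w: "y \<bottom>\<^sub>B w" "norm w = 1"
    and xz: "norm (a *\<^sub>R x + b *\<^sub>R z) = 1"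
  have ab: "a\<^sup>2 + b\<^sup>2 = 1"
    using power2_norm_scaleR_add[of a x b z] xz x z inner_eq_0_if_birkhoff_orth[OF z(1)] by simp
  obtain \<beta> where v: "v = \<beta> *\<^sub>R w" using circle_bound_imp_parallel[OF dim y bound w(1)] w(2) by fastforce
  show "norm (a *\<^sub>R y + (b * norm v) *\<^sub>R w) \<le> 1"
  proof (cases "0 \<le> \<beta>")
    case True
    then show ?thesis using bound[OF ab] v w(2) by simp
  next
    case False
    then have "(b * norm v) *\<^sub>R w = (- b) *\<^sub>R v" using v w(2) by simp
    then show ?thesis using bound[of a "- b"] ab by simp
  qed
qed

lemma CPP_into_inner:
  fixes x :: "'a::real_normed_vector" and y :: "'b::real_inner"
  assumes x: "norm x = 1" and y: "norm y = 1" and "0 < \<mu>"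
    and bound: "\<And>z a b. x \<bottom>\<^sub>B z \<Longrightarrow> norm z = 1 \<Longrightarrow> norm (a *\<^sub>R x + b *\<^sub>R z) = 1 \<Longrightarrow>
      a\<^sup>2 + (b * \<mu>)\<^sup>2 \<le> 1"
  shows "CPP x y"
proof (rule CPPI[OF x y \<open>0 < \<mu>\<close>])
  fix z w a b
  assume "x \<bottom>\<^sub>B z" "norm z = 1" "y \<bottom>\<^sub>B w" "norm w = 1" "norm (a *\<^sub>R x + b *\<^sub>R z) = 1"
  moreover have "y \<bullet> w = 0" using \<open>y \<bottom>\<^sub>B w\<close> by (rule inner_eq_0_if_birkhoff_orth)
  ultimately have "(norm (a *\<^sub>R y + (b * \<mu>) *\<^sub>R w))\<^sup>2 \<le> 1"
    using power2_norm_scaleR_add[of a y "b * \<mu>" w] bound y by simp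
  then show "norm (a *\<^sub>R y + (b * \<mu>) *\<^sub>R w) \<le> 1" by (simp add: power_le_one_iff)
qed

lemma extreme_contractionI:
  fixes T :: "'a::real_normed_vector \<Rightarrow>\<^sub>L 'b::real_normed_vector"
  assumes "norm T = 1" and perturb: "\<And>D. norm (T + D) \<le> 1 \<Longrightarrow> norm (T - D) \<le> 1 \<Longrightarrow> D = 0"
  shows "extreme_contraction T"
  unfolding extreme_contraction_def
proof (intro conjI allI impI assms(1))
  fix A B :: "'a \<Rightarrow>\<^sub>L 'b" and t :: real
  assume A: "norm A \<le> 1" and B: "norm B \<le> 1" and t: "0 < t" "t < 1"
    and T: "T = t *\<^sub>R A + (1 - t) *\<^sub>R B"
  have convex: "norm (p *\<^sub>R A + (1 - p) *\<^sub>R B) \<le> 1" if "0 \<le> p" "p \<le> 1" for p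
  proof -
    have "norm (p *\<^sub>R A + (1 - p) *\<^sub>R B) \<le> p * norm A + (1 - p) * norm B"
      using norm_triangle_ineq[of "p *\<^sub>R A" "(1 - p) *\<^sub>R B"] that by simp
    also have "\<dots> \<le> p + (1 - p)" using A B that by (intro add_mono) (simp_all add: mult_left_le)
    finally show ?thesis by simp
  qed
  define s where "s = min t (1 - t)"
  have s: "0 < s" "s \<le> t" "s \<le> 1 - t" using t unfolding s_def by auto
  have "T + s *\<^sub>R (A - B) = (t + s) *\<^sub>R A + (1 - (t + s)) *\<^sub>R B"
    "T - s *\<^sub>R (A - B) = (t - s) *\<^sub>R A + (1 - (t - s)) *\<^sub>R B"
    unfolding T by (simp_all add: algebra_simps)
  then have "s *\<^sub>R (A - B) = 0"
    using perturb[of "s *\<^sub>R (A - B)"] convex[of "t + s"] convex[of "t - s"] s t by simp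
  then show "A = B" using s by simp
qed

lemma contraction_apply_unit_le_1:
  assumes "norm S \<le> 1" "norm v = 1"
  shows "norm (blinfun_apply S v) \<le> 1"
  using norm_blinfun[of S v] assms by simp

lemma norming_point_perturbation_vanishes:
  fixes T D :: "'a::real_normed_vector \<Rightarrow>\<^sub>L 'b::real_normed_vector"
  assumes sc: "strictly_convex_space TYPE('b)" and "norm T = 1" "x \<in> norm_attainment_set T"
    and "norm (T + D) \<le> 1" "norm (T - D) \<le> 1"
  shows "blinfun_apply D x = 0"
proof -
  have x: "norm x = 1" and Tx: "norm (blinfun_apply T x) = 1"
    using assms(2,3) unfolding norm_attainment_set_def by auto
  show ?thesis
    using strictly_convex_unit_extreme[OF sc Tx] contraction_apply_unit_le_1[OF assms(4) x]
      contraction_apply_unit_le_1[OF assms(5) x]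
    by (simp add: blinfun.add_left blinfun.diff_left)
qed

lemma exists_orthogonal_unit_outside_kernel:
  fixes D :: "'a::real_inner \<Rightarrow>\<^sub>L 'b::real_normed_vector"
  assumes "D \<noteq> 0" "blinfun_apply D x = 0" "norm x = 1"
  obtains u where "norm u = 1" "x \<bullet> u = 0" "blinfun_apply D u \<noteq> 0"
proof -
  obtain v where v: "blinfun_apply D v \<noteq> 0" using assms(1) by (metis blinfun_eqI zero_blinfun.rep_eq)
  define w where "w = v - (v \<bullet> x) *\<^sub>R x"
  have Dw: "blinfun_apply D w = blinfun_apply D v"
    unfolding w_def by (simp add: blinfun.diff_right blinfun.scaleR_right assms(2))
  then have "w \<noteq> 0" using v by auto
  moreover have "x \<bullet> w = 0"
    using assms(3) unfolding w_def by (simp add: inner_diff_right inner_commute dot_square_norm)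
  ultimately show ?thesis
    using that[of "(1 / norm w) *\<^sub>R w"] Dw v by (simp add: blinfun.scaleR_right)
qed

lemma extreme_contraction_from_inner:
  fixes T :: "'a::real_inner \<Rightarrow>\<^sub>L 'b::real_normed_vector"
  assumes dim: "dim (UNIV::'b set) = 2" and sc: "strictly_convex_space TYPE('b)"
    and T: "norm T = 1" and xT: "x \<in> norm_attainment_set T"
    and not_CPP: "\<not> CPP x (blinfun_apply T x)"
  shows "extreme_contraction T"
proof (rule extreme_contractionI[OF T])
  fix D
  assume D: "norm (T + D) \<le> 1" "norm (T - D) \<le> 1"
  have x: "norm x = 1" and Tx: "norm (blinfun_apply T x) = 1"
    using xT T unfolding norm_attainment_set_def by auto
  have Dx: "blinfun_apply D x = 0" using norming_point_perturbation_vanishes[OF sc T xT D] .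
  show "D = 0"
  proof (rule ccontr)
    assume "D \<noteq> 0"
    then obtain u where u: "norm u = 1" "x \<bullet> u = 0" "blinfun_apply D u \<noteq> 0"
      using exists_orthogonal_unit_outside_kernel Dx x by metis
    have bound: "norm (a *\<^sub>R blinfun_apply T x + b *\<^sub>R (blinfun_apply T u + s *\<^sub>R blinfun_apply D u)) \<le> 1"
      if ab: "a\<^sup>2 + b\<^sup>2 = 1" and s: "s = 1 \<or> s = -1" for a b s
    proof -
      have "(norm (a *\<^sub>R x + b *\<^sub>R u))\<^sup>2 = 1\<^sup>2" using power2_norm_scaleR_add[of a x b u] x u ab by simp
      then have "norm (a *\<^sub>R x + b *\<^sub>R u) = 1" by (rule power2_eq_imp_eq) simp_all
      moreover have "norm (T + s *\<^sub>R D) \<le> 1" using D s by auto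
      moreover have "blinfun_apply (T + s *\<^sub>R D) (a *\<^sub>R x + b *\<^sub>R u)
          = a *\<^sub>R blinfun_apply T x + b *\<^sub>R (blinfun_apply T u + s *\<^sub>R blinfun_apply D u)"
        by (simp add: blinfun.add_left blinfun.scaleR_left blinfun.add_right blinfun.scaleR_right
            Dx algebra_simps)
      ultimately show ?thesis using contraction_apply_unit_le_1 by metis
    qed
    obtain v where "v \<noteq> 0" "\<And>a b. a\<^sup>2 + b\<^sup>2 = 1 \<Longrightarrow> norm (a *\<^sub>R blinfun_apply T x + b *\<^sub>R v) \<le> 1"
    proof (cases "blinfun_apply T u + blinfun_apply D u = 0")
      case True
      then have "blinfun_apply T u = - blinfun_apply D u" by (simp add: eq_neg_iff_add_eq_0)
      then have "blinfun_apply T u + (-1) *\<^sub>R blinfun_apply D u = - (2 *\<^sub>R blinfun_apply D u)"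
        by (simp add: scaleR_2)
      then have "blinfun_apply T u + (-1) *\<^sub>R blinfun_apply D u \<noteq> 0" using u(3) by simp
      then show ?thesis using that bound by blast
    next
      case False
      then show ?thesis using that bound[where s = 1] by simp
    qed
    then have "CPP x (blinfun_apply T x)" using CPP_of_circle_bound[OF dim x Tx] by blast
    with not_CPP show False by contradiction
  qed
qed

lemma rank_one_vanishes_on_birkhoff_orth:
  fixes T :: "'a::real_normed_vector \<Rightarrow>\<^sub>L 'b::real_inner"
  assumes dim: "dim (UNIV::'a set) = 2" and sm: "smooth_space TYPE('a)" and r: "rank_one T"
    and T: "norm T = 1" and xT: "x \<in> norm_attainment_set T" and xz: "x \<bottom>\<^sub>B z"
  shows "blinfun_apply T z = 0"
proof -
  define y where "y = blinfun_apply T x"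
  have x: "norm x = 1" and y: "norm y = 1"
    using xT T unfolding norm_attainment_set_def y_def by auto
  have "bounded_linear (\<lambda>u. blinfun_apply T u \<bullet> y)"
    by (intro bounded_linear_compose[OF bounded_linear_inner_left] blinfun.bounded_linear_right)
  then have g: "blinfun_apply (Blinfun (\<lambda>u. blinfun_apply T u \<bullet> y)) = (\<lambda>u. blinfun_apply T u \<bullet> y)"
    by (rule bounded_linear_Blinfun_apply)
  have gx: "blinfun_apply T x \<bullet> y = 1" using y unfolding y_def by (simp add: dot_square_norm)
  have "norm (Blinfun (\<lambda>u. blinfun_apply T u \<bullet> y)) \<le> 1"
  proof (rule norm_blinfun_bound)
    fix u
    have "\<bar>blinfun_apply T u \<bullet> y\<bar> \<le> norm (blinfun_apply T u) * norm y" by (rule Cauchy_Schwarz_ineq2)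
    also have "\<dots> \<le> norm u" using norm_blinfun[of T u] T y by simp
    finally show "norm (blinfun_apply (Blinfun (\<lambda>u. blinfun_apply T u \<bullet> y)) u) \<le> 1 * norm u"
      using g by simp
  qed simp
  moreover have "1 \<le> norm (Blinfun (\<lambda>u. blinfun_apply T u \<bullet> y))"
    using norm_blinfun[of "Blinfun (\<lambda>u. blinfun_apply T u \<bullet> y)" x] x g gx by simp
  ultimately have "blinfun_apply T z \<bullet> y = 0"
    using smooth_norming_functional_vanishes_on_birkhoff_orth[OF dim sm x xz] g gx by fastforce
  moreover have "blinfun_apply T z \<in> span {y}"
    using rank_one_apply_in_span[OF r, of x z] y unfolding y_def by force
  then obtain k where "blinfun_apply T z = k *\<^sub>R y" by (auto simp: span_singleton)
  ultimately show ?thesis using y by (simp add: dot_square_norm)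
qed

lemma smooth_norm_constant_on_birkhoff_orth_units:
  fixes D :: "'a::real_normed_vector \<Rightarrow>\<^sub>L 'b::real_normed_vector"
  assumes dim: "dim (UNIV::'a set) = 2" and sm: "smooth_space TYPE('a)" and x: "norm x = 1"
    and Dx: "blinfun_apply D x = 0" and "D \<noteq> 0"
  obtains \<mu> where "0 < \<mu>" "\<And>z. x \<bottom>\<^sub>B z \<Longrightarrow> norm z = 1 \<Longrightarrow> norm (blinfun_apply D z) = \<mu>"
proof (cases "\<exists>z\<^sub>0. x \<bottom>\<^sub>B z\<^sub>0 \<and> norm z\<^sub>0 = 1")
  case True
  then obtain z\<^sub>0 where z\<^sub>0: "x \<bottom>\<^sub>B z\<^sub>0" "norm z\<^sub>0 = 1" by blast
  have "blinfun_apply D z\<^sub>0 \<noteq> 0"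
  proof
    assume Dz\<^sub>0: "blinfun_apply D z\<^sub>0 = 0"
    have "independent {x, z\<^sub>0}" "x \<noteq> z\<^sub>0" using birkhoff_orth_independent z\<^sub>0 x by fastforce+
    have "D = 0"
    proof (rule blinfun_eqI)
      fix v
      obtain a b where "v = a *\<^sub>R x + b *\<^sub>R z\<^sub>0"
        using dim_2_independent_pair_spans[OF dim \<open>independent {x, z\<^sub>0}\<close> \<open>x \<noteq> z\<^sub>0\<close>] by blast
      then show "blinfun_apply D v = blinfun_apply 0 v"
        by (simp add: blinfun.add_right blinfun.scaleR_right Dx Dz\<^sub>0)
    qed
    with \<open>D \<noteq> 0\<close> show False by contradiction
  qed
  moreover have "norm (blinfun_apply D z) = norm (blinfun_apply D z\<^sub>0)" if "x \<bottom>\<^sub>B z" "norm z = 1" for z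
    using smooth_birkhoff_orth_unit_cases[OF dim sm x that z\<^sub>0] by (auto simp: blinfun.minus_right)
  ultimately show ?thesis using that[of "norm (blinfun_apply D z\<^sub>0)"] by auto
qed (use that[of 1] in auto)

lemma extreme_contraction_into_inner:
  fixes T :: "'a::real_normed_vector \<Rightarrow>\<^sub>L 'b::real_inner"
  assumes dim: "dim (UNIV::'a set) = 2" and sm: "smooth_space TYPE('a)" and r: "rank_one T"
    and T: "norm T = 1" and xT: "x \<in> norm_attainment_set T"
    and not_CPP: "\<not> CPP x (blinfun_apply T x)"
  shows "extreme_contraction T"
proof (rule extreme_contractionI[OF T])
  fix D
  assume D: "norm (T + D) \<le> 1" "norm (T - D) \<le> 1"
  have x: "norm x = 1" and Tx: "norm (blinfun_apply T x) = 1"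
    using xT T unfolding norm_attainment_set_def by auto
  have Dx: "blinfun_apply D x = 0"
    using norming_point_perturbation_vanishes[OF strictly_convex_space_inner T xT D] .
  show "D = 0"
  proof (rule ccontr)
    assume "D \<noteq> 0"
    then obtain \<mu> where \<mu>: "0 < \<mu>" "\<And>z. x \<bottom>\<^sub>B z \<Longrightarrow> norm z = 1 \<Longrightarrow> norm (blinfun_apply D z) = \<mu>"
      using smooth_norm_constant_on_birkhoff_orth_units[OF dim sm x Dx] by metis
    have "CPP x (blinfun_apply T x)"
    proof (rule CPP_into_inner[OF x Tx \<mu>(1)])
      fix z a b
      assume z: "x \<bottom>\<^sub>B z" "norm z = 1" and p: "norm (a *\<^sub>R x + b *\<^sub>R z) = 1"
      have "blinfun_apply T z = 0" using rank_one_vanishes_on_birkhoff_orth[OF dim sm r T xT z(1)] .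
      then have "blinfun_apply (T + D) (a *\<^sub>R x + b *\<^sub>R z) = a *\<^sub>R blinfun_apply T x + b *\<^sub>R blinfun_apply D z"
        "blinfun_apply (T - D) (a *\<^sub>R x + b *\<^sub>R z) = a *\<^sub>R blinfun_apply T x - b *\<^sub>R blinfun_apply D z"
        by (simp_all add: blinfun.add_left blinfun.diff_left blinfun.add_right blinfun.scaleR_right Dx)
      then have "(norm (a *\<^sub>R blinfun_apply T x))\<^sup>2 + (norm (b *\<^sub>R blinfun_apply D z))\<^sup>2 \<le> 1"
        using contraction_apply_unit_le_1[OF D(1) p] contraction_apply_unit_le_1[OF D(2) p]
        by (intro parallelogram_bound) simp_all
      then show "a\<^sup>2 + (b * \<mu>)\<^sup>2 \<le> 1" using Tx \<mu>(2)[OF z] by (simp add: power_mult_distrib)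
    qed
    with not_CPP show False by contradiction
  qed
qed

theorem mainTheorem6:
  assumes H_dim: "\<exists>u v::'h::{real_inner, complete_space}. independent {u, v} \<and> u \<noteq> v"
    and X_dim: "dim (UNIV :: 'x::banach set) = 2"
    and X_sc: "strictly_convex_space TYPE('x)"
    and X_sm: "smooth_space TYPE('x)"
    and Y_dim: "dim (UNIV :: 'y::banach set) = 2"
    and Y_sc: "strictly_convex_space TYPE('y)"
    and Y_sm: "smooth_space TYPE('y)"
  shows "(\<forall>(T::'h \<Rightarrow>\<^sub>L 'y) x. rank_one T \<and> norm T = 1 \<and> x \<in> norm_attainment_set T \<and> \<not> CPP x (blinfun_apply T x)
            \<longrightarrow> extreme_contraction T)
       \<and> (\<forall>(T::'x \<Rightarrow>\<^sub>L 'h) x. rank_one T \<and> norm T = 1 \<and> x \<in> norm_attainment_set T \<and> \<not> CPP x (blinfun_apply T x)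
            \<longrightarrow> extreme_contraction T)"
  using extreme_contraction_from_inner[OF Y_dim Y_sc] extreme_contraction_into_inner[OF X_dim X_sm]
  by blast

end
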